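(* Let $\mathcal{X}_0=\{\mathbf{x}^{(0)}_1,\dots,\mathbf{x}^{(0)}_{n_0}\}$ and $\mathcal{X}_1=\{\mathbf{x}^{(1)}_1,\dots,\mathbf{x}^{(1)}_{n_1}\}$ be finite sets of points in $\mathbb{R}^d$, let $\mathcal{P}_0,\mathcal{P}_1$ be the uniform (empirical) distributions on them, and let $\mathbf{X}_0\sim\mathcal{P}_0$, $\mathbf{X}_1\sim\mathcal{P}_1$. Let $f:\mathbb{R}^d\times\{0,1\}\to[0,1]$, and let $\mathcal{P}_{f_0},\mathcal{P}_{f_1}$ be the empirical distributions on $f(\mathcal{X}_0)=\{f(\mathbf{x},0):\mathbf{x}\in\mathcal{X}_0\}$ and $f(\mathcal{X}_1)=\{f(\mathbf{x},1):\mathbf{x}\in\mathcal{X}_1\}$, i.e. the distributions of $f(\mathbf{X}_0,0)$ and $f(\mathbf{X}_1,1)$. Assume the supports of $\mathcal{P}_{f_0}$ and $\mathcal{P}_{f_1}$ share $m\ (\le n_0,n_1)$ common points. Then for any $\delta\ge0$, if $\Delta\mathrm{TVDP}(f)\le\delta$, there exists a joint distribution $\mathbb{Q}$ of $(\mathbf{X}_0,\mathbf{X}_1)$ with marginals $\mathcal{P}_0$ and $\mathcal{P}_1$ such that $\Delta\mathrm{MDP}(f,\mathbb{Q})\le\delta$.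
   Context: $\Delta\mathrm{TVDP}(f):=\mathrm{TV}(\mathcal{P}_{f_0},\mathcal{P}_{f_1})$, where for discrete distributions $\mathrm{TV}(\mathcal{Q}_1,\mathcal{Q}_2)=\sup_B|\mathcal{Q}_1(B)-\mathcal{Q}_2(B)|=\tfrac12\sum_z|\mathcal{Q}_1(z)-\mathcal{Q}_2(z)|$. For a joint distribution $\mathbb{Q}$ of $(\mathbf{X}_0,\mathbf{X}_1)$ with marginals $\mathcal{P}_0,\mathcal{P}_1$ (a stochastic transport map), $\Delta\mathrm{MDP}(f,\mathbb{Q}):=\mathbb{E}_{(\mathbf{X}_0,\mathbf{X}_1)\sim\mathbb{Q}}|f(\mathbf{X}_0,0)-f(\mathbf{X}_1,1)|$. *)

theory Defs
  imports "HOL-Probability.Probability"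
begin

definition TV :: "'a pmf \<Rightarrow> 'a pmf \<Rightarrow> real" where
  "TV Q1 Q2 = (SUP B. \<bar>measure_pmf.prob Q1 B - measure_pmf.prob Q2 B\<bar>)"

definition Pf :: "('a \<Rightarrow> nat \<Rightarrow> real) \<Rightarrow> nat \<Rightarrow> 'a pmf \<Rightarrow> real pmf" where
  "Pf f s P = map_pmf (\<lambda>x. f x s) P"

definition DeltaTVDP :: "('a \<Rightarrow> nat \<Rightarrow> real) \<Rightarrow> 'a pmf \<Rightarrow> 'a pmf \<Rightarrow> real" where
  "DeltaTVDP f P0 P1 = TV (Pf f 0 P0) (Pf f 1 P1)"

definition DeltaMDP :: "('a \<Rightarrow> nat \<Rightarrow> real) \<Rightarrow> ('a \<times> 'a) pmf \<Rightarrow> real" where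
  "DeltaMDP f Q = measure_pmf.expectation Q (\<lambda>(x0, x1). \<bar>f x0 0 - f x1 1\<bar>)"

end

theory Submission
  imports Defs
begin

text \<open>
  Let p and q be the (finitely supported) laws of f(X0, 0) and f(X1, 1). The maximal coupling
  of p and q puts the common mass min(p, q) on the diagonal and couples the excess masses
  independently; it disagrees with probability at most TV(p, q). As f takes values in [0, 1],
  the expected distance between the coupled values is at most this probability. Gluing the
  conditional laws of X0 and X1 given the values of f to this coupling yields a coupling of
  P0 and P1 whose image under f is the maximal coupling.
\<close>

lemma prob_diff_le_TV:
  "\<bar>measure_pmf.prob p B - measure_pmf.prob q B\<bar> \<le> TV p q"
  unfolding TV_def
proof (rule cSUP_upper)
  have "\<bar>measure_pmf.prob p A - measure_pmf.prob q A\<bar> \<le> 1" for A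
    using measure_pmf.prob_le_1[of p A] measure_pmf.prob_le_1[of q A] measure_nonneg[of p A]
      measure_nonneg[of q A] unfolding abs_le_iff by linarith
  then show "bdd_above (range (\<lambda>A. \<bar>measure_pmf.prob p A - measure_pmf.prob q A\<bar>))"
    by (intro bdd_aboveI[of _ 1]) auto
qed simp

lemma sum_excess_pmf_le_TV:
  assumes "finite A"
  shows "(\<Sum>y\<in>A. max 0 (pmf p y - pmf q y)) \<le> TV p q"
proof -
  define B where "B = {y \<in> A. pmf q y < pmf p y}"
  have "(\<Sum>y\<in>A. max 0 (pmf p y - pmf q y)) = (\<Sum>y\<in>B. pmf p y - pmf q y)"
    unfolding B_def using assms by (subst sum.inter_filter) (auto intro: sum.cong)
  also have "\<dots> = measure_pmf.prob p B - measure_pmf.prob q B"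
    using assms by (simp add: B_def measure_measure_pmf_finite sum_subtractf)
  also have "\<dots> \<le> TV p q"
    using prob_diff_le_TV[of p B q] by linarith
  finally show ?thesis .
qed

lemma pmf_embed_pmf_finite_support:
  fixes w :: "'a \<Rightarrow> real"
  assumes "finite F" "\<And>z. 0 \<le> w z" "\<And>z. z \<notin> F \<Longrightarrow> w z = 0" "(\<Sum>z\<in>F. w z) = 1"
  shows "pmf (embed_pmf w) = w"
proof
  have "(\<integral>\<^sup>+z. ennreal (w z) \<partial>count_space UNIV) = (\<Sum>z\<in>F. ennreal (w z))"
    using assms(1,3) by (intro nn_integral_count_space') auto
  also have "\<dots> = 1"
    using assms(2,4) by (subst sum_ennreal) auto
  finally show "pmf (embed_pmf w) z = w z" for z
    using assms(2) by (intro pmf_embed_pmf) auto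
qed

lemma prob_eq_sum_finite_support:
  assumes "finite F" "\<And>z. z \<notin> F \<Longrightarrow> pmf M z = 0"
  shows "measure_pmf.prob M A = (\<Sum>z\<in>A \<inter> F. pmf M z)"
proof -
  have "measure_pmf.prob M A = measure_pmf.prob M (A \<inter> F)"
    using assms(2) by (intro measure_prob_cong_0) auto
  then show ?thesis
    using assms(1) by (simp add: measure_measure_pmf_finite)
qed

lemma expectation_le_prob:
  fixes g :: "'a \<Rightarrow> real"
  assumes "\<And>x. x \<in> set_pmf M \<Longrightarrow> 0 \<le> g x \<and> g x \<le> indicator A x"
  shows "measure_pmf.expectation M g \<le> measure_pmf.prob M A"
proof -
  have "norm (g x) \<le> 1" if "x \<in> set_pmf M" for x
    using assms[OF that] by (cases "x \<in> A") auto
  then have "measure_pmf.expectation M g \<le> measure_pmf.expectation M (indicator A)"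
    by (intro integral_mono_AE measure_pmf.integrable_const_bound[where B=1])
      (use assms in \<open>auto simp: AE_measure_pmf_iff\<close>)
  then show ?thesis
    by simp
qed

lemma expectation_dist_le_prob_ne:
  fixes W :: "(real \<times> real) pmf"
  assumes "set_pmf W \<subseteq> {0..1} \<times> {0..1}"
  shows "measure_pmf.expectation W (\<lambda>(a, b). \<bar>a - b\<bar>) \<le> measure_pmf.prob W {z. fst z \<noteq> snd z}"
proof (intro expectation_le_prob, clarify)
  fix a b
  assume "(a, b) \<in> set_pmf W"
  then have "a \<in> {0..1}" "b \<in> {0..1}"
    using assms by auto
  then show "0 \<le> \<bar>a - b\<bar> \<and> \<bar>a - b\<bar> \<le> indicator {z. fst z \<noteq> snd z} (a, b)"
    by (cases "a = b") (auto simp: abs_le_iff)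
qed

lemma bind_cond_pmf_fibres:
  "bind_pmf (map_pmf g P) (\<lambda>a. cond_pmf P (g -` {a})) = P"
proof -
  have "bind_pmf (map_pmf g P) (\<lambda>a. cond_pmf P (g -` {a})) =
      bind_pmf P (\<lambda>x. cond_pmf P {y. g x = g y})"
    by (simp add: bind_map_pmf vimage_def eq_commute)
  also have "\<dots> = P"
    by (rule bind_cond_pmf_cancel) (auto simp: eq_commute)
  finally show ?thesis .
qed

locale finite_pmf_pair =
  fixes p q :: "'a pmf"
  assumes finite_p: "finite (set_pmf p)" and finite_q: "finite (set_pmf q)"
begin

definition support :: "'a set" where
  "support = set_pmf p \<union> set_pmf q"

definition overlap :: "'a \<Rightarrow> real" where
  "overlap y = min (pmf p y) (pmf q y)"

definition excess_p :: "'a \<Rightarrow> real" where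
  "excess_p y = pmf p y - overlap y"

definition excess_q :: "'a \<Rightarrow> real" where
  "excess_q y = pmf q y - overlap y"

definition excess :: real where
  "excess = (\<Sum>y\<in>support. excess_p y)"

definition coupling_weight :: "'a \<times> 'a \<Rightarrow> real" where
  "coupling_weight = (\<lambda>(a, b). (if a = b then overlap a else 0) + excess_p a * excess_q b / excess)"

definition coupling :: "('a \<times> 'a) pmf" where
  "coupling = embed_pmf coupling_weight"

lemma finite_support: "finite support"
  using finite_p finite_q by (simp add: support_def)

lemma outside_support: "y \<notin> support \<Longrightarrow> overlap y = 0 \<and> excess_p y = 0 \<and> excess_q y = 0"
  by (auto simp: support_def overlap_def excess_p_def excess_q_def set_pmf_iff)

lemma overlap_nonneg: "0 \<le> overlap y"
  and excess_p_nonneg: "0 \<le> excess_p y"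
  and excess_q_nonneg: "0 \<le> excess_q y"
  by (auto simp: overlap_def excess_p_def excess_q_def)

lemma sum_overlap: "(\<Sum>y\<in>support. overlap y) = 1 - excess"
proof -
  have "(\<Sum>y\<in>support. pmf p y) = 1"
    using finite_p finite_q by (intro sum_pmf_eq_1) (auto simp: support_def)
  then show ?thesis
    by (simp add: excess_def excess_p_def sum_subtractf)
qed

lemma sum_excess_q: "(\<Sum>y\<in>support. excess_q y) = excess"
proof -
  have "(\<Sum>y\<in>support. pmf q y) = 1"
    using finite_p finite_q by (intro sum_pmf_eq_1) (auto simp: support_def)
  then show ?thesis
    using sum_overlap by (simp add: excess_q_def sum_subtractf)
qed

lemma excess_zero: "excess = 0 \<Longrightarrow> excess_p y = 0 \<and> excess_q y = 0"
  using sum_excess_q outside_support[of y] excess_p_nonneg excess_q_nonneg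
    sum_nonneg_eq_0_iff[OF finite_support] unfolding excess_def by metis

lemma excess_le_TV: "excess \<le> TV p q"
proof -
  have "excess = (\<Sum>y\<in>support. max 0 (pmf p y - pmf q y))"
    unfolding excess_def by (intro sum.cong) (auto simp: excess_p_def overlap_def)
  then show ?thesis
    using finite_support by (simp add: sum_excess_pmf_le_TV)
qed

lemma pmf_coupling: "pmf coupling = coupling_weight"
  unfolding coupling_def
proof (rule pmf_embed_pmf_finite_support[where F="support \<times> support"])
  show "0 \<le> coupling_weight z" for z
    using overlap_nonneg excess_p_nonneg excess_q_nonneg sum_nonneg[of support excess_p]
    by (auto simp: coupling_weight_def excess_def
        intro!: add_nonneg_nonneg divide_nonneg_nonneg split: prod.splits)
  show "coupling_weight z = 0" if "z \<notin> support \<times> support" for z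
    using that by (cases z) (auto simp: coupling_weight_def outside_support)
  have "(\<Sum>z\<in>support \<times> support. coupling_weight z) = (\<Sum>a\<in>support. overlap a + excess_p a)"
    using finite_support excess_zero
    by (cases "excess = 0") (simp_all add: coupling_weight_def sum.cartesian_product'
        sum.distrib sum_excess_q flip: sum_distrib_left sum_divide_distrib)
  then show "(\<Sum>z\<in>support \<times> support. coupling_weight z) = 1"
    by (simp add: sum.distrib sum_overlap excess_def)
qed (use finite_support in auto)

lemma prob_coupling:
  "measure_pmf.prob coupling A = (\<Sum>z\<in>A \<inter> support \<times> support. coupling_weight z)"
proof (subst prob_eq_sum_finite_support[where F="support \<times> support"])
  show "pmf coupling z = 0" if "z \<notin> support \<times> support" for z
    using that by (cases z) (auto simp: pmf_coupling coupling_weight_def outside_support)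
qed (use finite_support pmf_coupling in auto)

lemma map_fst_coupling: "map_pmf fst coupling = p"
proof (rule pmf_eqI)
  fix a
  show "pmf (map_pmf fst coupling) a = pmf p a"
  proof (cases "a \<in> support")
    case True
    then have "fst -` {a} \<inter> support \<times> support = Pair a ` support"
      by auto
    then have "pmf (map_pmf fst coupling) a = (\<Sum>b\<in>support. coupling_weight (a, b))"
      by (simp add: pmf_map prob_coupling sum.reindex inj_on_def)
    also have "\<dots> = overlap a + excess_p a"
      using finite_support True excess_zero
      by (cases "excess = 0") (simp_all add: coupling_weight_def sum.distrib sum_excess_q
          flip: sum_distrib_left sum_divide_distrib)
    finally show ?thesis
      by (simp add: excess_p_def)
  next
    case False
    then have "fst -` {a} \<inter> support \<times> support = {}"
      by auto
    with False show ?thesis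
      by (simp add: pmf_map prob_coupling support_def set_pmf_iff)
  qed
qed

lemma map_snd_coupling: "map_pmf snd coupling = q"
proof (rule pmf_eqI)
  fix b
  show "pmf (map_pmf snd coupling) b = pmf q b"
  proof (cases "b \<in> support")
    case True
    then have "snd -` {b} \<inter> support \<times> support = (\<lambda>a. (a, b)) ` support"
      by auto
    then have "pmf (map_pmf snd coupling) b = (\<Sum>a\<in>support. coupling_weight (a, b))"
      by (simp add: pmf_map prob_coupling sum.reindex inj_on_def)
    also have "\<dots> = overlap b + excess_q b"
      using finite_support True excess_zero
      by (cases "excess = 0") (simp_all add: coupling_weight_def sum.distrib
          flip: sum_distrib_right sum_divide_distrib excess_def)
    finally show ?thesis
      by (simp add: excess_q_def)
  next
    case False
    then have "snd -` {b} \<inter> support \<times> support = {}"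
      by auto
    with False show ?thesis
      by (simp add: pmf_map prob_coupling support_def set_pmf_iff)
  qed
qed

lemma prob_coupling_disagree: "measure_pmf.prob coupling {z. fst z \<noteq> snd z} \<le> excess"
proof -
  have "measure_pmf.prob coupling {z. fst z \<noteq> snd z} =
      (\<Sum>z\<in>{z. fst z \<noteq> snd z} \<inter> support \<times> support. excess_p (fst z) * excess_q (snd z) / excess)"
    unfolding prob_coupling by (rule sum.cong) (auto simp: coupling_weight_def)
  also have "\<dots> \<le> (\<Sum>z\<in>support \<times> support. excess_p (fst z) * excess_q (snd z) / excess)"
    using finite_support excess_p_nonneg excess_q_nonneg sum_nonneg[of support excess_p]
    by (intro sum_mono2) (auto simp: excess_def intro!: divide_nonneg_nonneg)
  also have "\<dots> = excess * excess / excess"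
    by (simp add: sum.cartesian_product' sum_excess_q
        flip: sum_distrib_left sum_distrib_right sum_divide_distrib excess_def)
  finally show ?thesis
    by simp
qed

end

lemma maximal_coupling_pmf:
  fixes p q :: "'a pmf"
  assumes "finite (set_pmf p)" "finite (set_pmf q)"
  shows "\<exists>W. map_pmf fst W = p \<and> map_pmf snd W = q \<and>
           measure_pmf.prob W {z. fst z \<noteq> snd z} \<le> TV p q"
proof -
  interpret finite_pmf_pair p q
    using assms by unfold_locales
  show ?thesis
    using map_fst_coupling map_snd_coupling prob_coupling_disagree excess_le_TV
    by (blast intro: order_trans)
qed

lemma coupling_lift_map_pmf:
  assumes "map_pmf fst W = map_pmf g0 P0" "map_pmf snd W = map_pmf g1 P1"
  shows "\<exists>Q. map_pmf fst Q = P0 \<and> map_pmf snd Q = P1 \<and> map_pmf (map_prod g0 g1) Q = W"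
proof -
  define Q where
    "Q = bind_pmf W (\<lambda>(a, b). pair_pmf (cond_pmf P0 (g0 -` {a})) (cond_pmf P1 (g1 -` {b})))"
  have "map_pmf fst Q = bind_pmf (map_pmf fst W) (\<lambda>a. cond_pmf P0 (g0 -` {a}))"
    by (simp add: Q_def map_bind_pmf map_fst_pair_pmf bind_map_pmf split_beta)
  also have "\<dots> = P0"
    by (simp add: assms bind_cond_pmf_fibres)
  finally have "map_pmf fst Q = P0" .
  moreover have "map_pmf snd Q = bind_pmf (map_pmf snd W) (\<lambda>b. cond_pmf P1 (g1 -` {b}))"
    by (simp add: Q_def map_bind_pmf map_snd_pair_pmf bind_map_pmf split_beta)
  then have "map_pmf snd Q = P1"
    by (simp add: assms bind_cond_pmf_fibres)
  moreover have "map_pmf (map_prod g0 g1) Q = bind_pmf W return_pmf"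
    unfolding Q_def map_bind_pmf
  proof (rule bind_pmf_cong[OF refl], clarify)
    fix a b
    assume "(a, b) \<in> set_pmf W"
    then have "a \<in> g0 ` set_pmf P0" "b \<in> g1 ` set_pmf P1"
      using assms by (metis fst_conv snd_conv pmf.set_map imageI)+
    then have "set_pmf P0 \<inter> g0 -` {a} \<noteq> {}" "set_pmf P1 \<inter> g1 -` {b} \<noteq> {}"
      by auto
    then show "map_pmf (map_prod g0 g1) (pair_pmf (cond_pmf P0 (g0 -` {a})) (cond_pmf P1 (g1 -` {b}))) =
        return_pmf (a, b)"
      by (auto simp: map_pmf_eq_return_pmf_iff)
  qed
  ultimately show ?thesis
    by (auto simp: bind_return_pmf')
qed

theorem mainTheorem3:
  fixes X0 X1 :: "(real ^ 'd) set"
    and f :: "real ^ 'd \<Rightarrow> nat \<Rightarrow> real"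
    and m :: nat and \<delta> :: real
  assumes "finite X0" "X0 \<noteq> {}" "finite X1" "X1 \<noteq> {}"
    and "\<And>x s. s \<in> {0, 1} \<Longrightarrow> f x s \<in> {0..1}"
    and "card (set_pmf (Pf f 0 (pmf_of_set X0)) \<inter> set_pmf (Pf f 1 (pmf_of_set X1))) = m"
    and "m \<le> card X0" "m \<le> card X1"
    and "\<delta> \<ge> 0"
    and "DeltaTVDP f (pmf_of_set X0) (pmf_of_set X1) \<le> \<delta>"
  shows "\<exists>Q :: ((real ^ 'd) \<times> (real ^ 'd)) pmf.
           map_pmf fst Q = pmf_of_set X0 \<and> map_pmf snd Q = pmf_of_set X1 \<and>
           DeltaMDP f Q \<le> \<delta>"
proof -
  define p where "p = Pf f 0 (pmf_of_set X0)"
  define q where "q = Pf f 1 (pmf_of_set X1)"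
  have "finite (set_pmf p)" "finite (set_pmf q)"
    using assms(1-4) by (simp_all add: p_def q_def Pf_def)
  then obtain W where W: "map_pmf fst W = p" "map_pmf snd W = q"
    and W_disagree: "measure_pmf.prob W {z. fst z \<noteq> snd z} \<le> TV p q"
    using maximal_coupling_pmf by blast
  have "set_pmf W \<subseteq> set_pmf p \<times> set_pmf q"
    by (force simp flip: W)
  also have "\<dots> \<subseteq> {0..1} \<times> {0..1}"
    using assms(5) by (auto simp: p_def q_def Pf_def)
  finally have W_cost:
    "measure_pmf.expectation W (\<lambda>(a, b). \<bar>a - b\<bar>) \<le> measure_pmf.prob W {z. fst z \<noteq> snd z}"
    by (rule expectation_dist_le_prob_ne)
  obtain Q where "map_pmf fst Q = pmf_of_set X0" "map_pmf snd Q = pmf_of_set X1"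
    and Q_image: "map_pmf (map_prod (\<lambda>x. f x 0) (\<lambda>x. f x 1)) Q = W"
    using coupling_lift_map_pmf[of W "\<lambda>x. f x 0" _ "\<lambda>x. f x 1"] W
    by (auto simp: p_def q_def Pf_def)
  moreover have "DeltaMDP f Q = measure_pmf.expectation W (\<lambda>(a, b). \<bar>a - b\<bar>)"
    by (simp add: DeltaMDP_def case_prod_unfold flip: Q_image)
  ultimately show ?thesis
    using W_cost W_disagree assms(10) unfolding DeltaTVDP_def p_def q_def by auto
qed

end
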